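(* Under the curve flow $\gamma_t=\gamma''-\tfrac23k_1\gamma$, one has $(k_1)_t=D(k_1'+2k_2)$, so $\int k_1\,\mathrm{d}x$ is conserved.
   Context: $\gamma(x,t)$ is a family of nondegenerate curves in centroaffine $\mathbb R^3$ parametrized by centroaffine arclength $x$ ($\det(\gamma,\gamma',\gamma'')=1$), with invariants $k_1,k_2$ defined by $\gamma'''=(k_1\gamma)'+k_2\gamma$; $D=\partial/\partial x$. *)

theory Defs
  imports "HOL-Analysis.Analysis"
begin

text \<open>Functions of two real variables (x = arclength parameter, t = time).
  Partial derivatives with respect to x and t.\<close>

definition Dx :: "(real \<Rightarrow> real \<Rightarrow> 'a::real_normed_vector) \<Rightarrow> real \<Rightarrow> real \<Rightarrow> 'a" where
  "Dx f = (\<lambda>x t. vector_derivative (\<lambda>s. f s t) (at x))"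

definition Dt :: "(real \<Rightarrow> real \<Rightarrow> 'a::real_normed_vector) \<Rightarrow> real \<Rightarrow> real \<Rightarrow> 'a" where
  "Dt f = (\<lambda>x t. vector_derivative (\<lambda>s. f x s) (at t))"

text \<open>Smoothness (C-infinity) on the whole (x,t)-plane: f lies in a class of
  (jointly Frechet) differentiable functions closed under both partial derivatives.\<close>

definition smooth2 :: "(real \<Rightarrow> real \<Rightarrow> 'a::real_normed_vector) \<Rightarrow> bool" where
  "smooth2 f \<longleftrightarrow> (\<exists>S. f \<in> S \<and>
     (\<forall>g\<in>S. (\<forall>p. (case_prod g) differentiable (at p)) \<and> Dx g \<in> S \<and> Dt g \<in> S))"

definition det3 :: "real^3 \<Rightarrow> real^3 \<Rightarrow> real^3 \<Rightarrow> real" where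
  "det3 a b c = det (vector [a, b, c] :: real^3^3)"

end

theory Submission
  imports Defs
begin

text \<open>Vectors are written in the moving frame \<open>(\<gamma>, \<gamma>', \<gamma>'')\<close>, a basis because
  \<open>det(\<gamma>, \<gamma>', \<gamma>'') = 1\<close>. The functional \<open>det(\<gamma>, -, \<gamma>'')\<close> reads off the \<open>\<gamma>'\<close>-coordinate,
  and the structure equation \<open>\<gamma>''' = k1 \<gamma>' + (k1' + k2) \<gamma>\<close> turns differentiation in x into a
  closed rule on frame coordinates. Mixed partials commute, so \<open>(\<gamma>''')\<^sub>t = (\<gamma>\<^sub>t)'''\<close>; the
  \<open>\<gamma>'\<close>-coordinate of the left side is \<open>(k1)\<^sub>t + k1\<^sup>2/3\<close>, and by the flow
  \<open>\<gamma>\<^sub>t = \<gamma>'' - 2/3 k1 \<gamma>\<close> that of the right side is \<open>k1'' + 2 k2' + k1\<^sup>2/3\<close>. For a closed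
  curve of period L the invariants are L-periodic, being determinants of frame vectors, so the
  time derivative of \<open>\<integral>\<^sub>0\<^sup>L k1 dx\<close> is \<open>[k1' + 2 k2]\<^sub>0\<^sup>L = 0\<close>.\<close>

lemma det3_add_middle: "det3 a (u + v) c = det3 a u c + det3 a v c"
  unfolding det3_def det_3 by (simp add: vector_def algebra_simps)

lemma det3_scaleR_middle: "det3 a (r *\<^sub>R u) c = r * det3 a u c"
  unfolding det3_def det_3 by (simp add: vector_def algebra_simps)

lemma det3_same_first_middle: "det3 a a c = 0"
  unfolding det3_def det_3 by (simp add: vector_def algebra_simps)

lemma det3_combination_first: "det3 (p *\<^sub>R a + q *\<^sub>R b + r *\<^sub>R c) b c = p * det3 a b c"
  unfolding det3_def det_3 by (simp add: vector_def algebra_simps)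

lemma det3_combination_middle: "det3 a (p *\<^sub>R a + q *\<^sub>R b + r *\<^sub>R c) c = q * det3 a b c"
  unfolding det3_def det_3 by (simp add: vector_def algebra_simps)

lemma Dx_eqI: "((\<lambda>s. f s t) has_vector_derivative v) (at x) \<Longrightarrow> Dx f x t = v"
  unfolding Dx_def by (rule vector_derivative_at)

lemma Dx_real_eqI: "((\<lambda>s. f s t) has_real_derivative v) (at x) \<Longrightarrow> Dx f x t = v"
  by (simp add: Dx_eqI has_real_derivative_iff_has_vector_derivative)

lemma Dt_eqI: "((\<lambda>s. f x s) has_vector_derivative v) (at t) \<Longrightarrow> Dt f x t = v"
  unfolding Dt_def by (rule vector_derivative_at)

lemma smooth2_Dx: "smooth2 f \<Longrightarrow> smooth2 (Dx f)"
  unfolding smooth2_def by blast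

lemma smooth2_Dt: "smooth2 f \<Longrightarrow> smooth2 (Dt f)"
  unfolding smooth2_def by blast

lemma smooth2_differentiable: "smooth2 f \<Longrightarrow> case_prod f differentiable (at p)"
  unfolding smooth2_def by blast

lemma smooth2_differentiable_x: "smooth2 f \<Longrightarrow> (\<lambda>s. f s t) differentiable (at x)"
  using differentiable_chain_at[of "\<lambda>s. (s, t)" x "case_prod f"]
  by (auto intro!: smooth2_differentiable derivative_intros simp: o_def)

lemma smooth2_differentiable_t: "smooth2 f \<Longrightarrow> (\<lambda>s. f x s) differentiable (at t)"
  using differentiable_chain_at[of "\<lambda>s. (x, s)" t "case_prod f"]
  by (auto intro!: smooth2_differentiable derivative_intros simp: o_def)

lemma has_vector_derivative_Dx: "smooth2 f \<Longrightarrow> ((\<lambda>s. f s t) has_vector_derivative Dx f x t) (at x)"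
  unfolding Dx_def by (rule vector_derivative_works[THEN iffD1, OF smooth2_differentiable_x])

lemma has_vector_derivative_Dt: "smooth2 f \<Longrightarrow> ((\<lambda>s. f x s) has_vector_derivative Dt f x t) (at t)"
  unfolding Dt_def by (rule vector_derivative_works[THEN iffD1, OF smooth2_differentiable_t])

lemma has_real_derivative_Dx:
  "smooth2 (f :: real \<Rightarrow> real \<Rightarrow> real) \<Longrightarrow> ((\<lambda>s. f s t) has_real_derivative Dx f x t) (at x)"
  by (simp add: has_real_derivative_iff_has_vector_derivative has_vector_derivative_Dx)

lemma has_real_derivative_Dt:
  "smooth2 (f :: real \<Rightarrow> real \<Rightarrow> real) \<Longrightarrow> ((\<lambda>s. f x s) has_real_derivative Dt f x t) (at t)"
  by (simp add: has_real_derivative_iff_has_vector_derivative has_vector_derivative_Dt)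

lemma smooth2_continuous_on: "smooth2 f \<Longrightarrow> continuous_on A (case_prod f)"
  by (meson continuous_at_imp_continuous_on differentiable_imp_continuous_within smooth2_differentiable)

lemma smooth2_continuous_on_x: "smooth2 f \<Longrightarrow> continuous_on A (\<lambda>s. f s t)"
  using continuous_on_compose[of A "\<lambda>s. (s, t)" "case_prod f"]
  by (simp add: o_def continuous_intros smooth2_continuous_on)

lemma smooth2_continuous_on_swap: "smooth2 f \<Longrightarrow> continuous_on A (\<lambda>(t, x). f x t)"
proof -
  assume f: "smooth2 f"
  have "continuous_on A (case_prod f \<circ> (\<lambda>(t, x). (x, t)))"
    by (rule continuous_on_compose)
      (auto intro!: continuous_intros smooth2_continuous_on[OF f, unfolded case_prod_unfold] simp: split_beta)
  then show ?thesis
    by (simp add: o_def split_beta)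
qed

lemma has_vector_derivative_integral_Dt:
  fixes f :: "real \<Rightarrow> real \<Rightarrow> 'a::banach"
  assumes "smooth2 f"
  shows "((\<lambda>t. integral {a..b} (\<lambda>x. f x t)) has_vector_derivative integral {a..b} (\<lambda>x. Dt f x t)) (at t)"
  using leibniz_rule_vector_derivative[of UNIV a b "\<lambda>t x. f x t" "\<lambda>t x. Dt f x t" t]
  by (simp add: cbox_interval assms has_vector_derivative_Dt integrable_continuous_interval
      smooth2_continuous_on_x smooth2_continuous_on_swap smooth2_Dt)

lemma integral_Dx:
  fixes f :: "real \<Rightarrow> real \<Rightarrow> 'a::banach"
  assumes "a \<le> b" and "\<And>s. (\<lambda>s. f s t) differentiable (at s)"
  shows "integral {a..b} (\<lambda>s. Dx f s t) = f b t - f a t"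
proof (rule integral_unique, rule fundamental_theorem_of_calculus[OF \<open>a \<le> b\<close>])
  show "((\<lambda>s. f s t) has_vector_derivative Dx f s t) (at s within {a..b})" for s
    using assms(2) unfolding Dx_def by (simp add: vector_derivative_works has_vector_derivative_at_within)
qed

lemma Dt_eq_integral_Dt_Dx:
  fixes f :: "real \<Rightarrow> real \<Rightarrow> 'a::banach"
  assumes f: "smooth2 f" and "a \<le> x"
  shows "Dt f x t = Dt f a t + integral {a..x} (\<lambda>s. Dt (Dx f) s t)"
proof (rule Dt_eqI)
  have "f x = (\<lambda>t. f a t + integral {a..x} (\<lambda>s. Dx f s t))"
    using integral_Dx[OF \<open>a \<le> x\<close> smooth2_differentiable_x[OF f]] by auto
  moreover have "((\<lambda>t. f a t + integral {a..x} (\<lambda>s. Dx f s t)) has_vector_derivative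
      Dt f a t + integral {a..x} (\<lambda>s. Dt (Dx f) s t)) (at t)"
    by (intro has_vector_derivative_add has_vector_derivative_Dt has_vector_derivative_integral_Dt
        smooth2_Dx f)
  ultimately show "((\<lambda>s. f x s) has_vector_derivative Dt f a t + integral {a..x} (\<lambda>s. Dt (Dx f) s t)) (at t)"
    by simp
qed

lemma Dt_Dx_commute:
  fixes f :: "real \<Rightarrow> real \<Rightarrow> 'a::banach"
  assumes f: "smooth2 f"
  shows "Dt (Dx f) = Dx (Dt f)"
proof (intro ext)
  fix x t :: real
  let ?a = "x - 1" and ?b = "x + 1" and ?g = "\<lambda>s. Dt (Dx f) s t"
  have x: "x \<in> {?a<..<?b}" by simp
  have "continuous_on {?a..?b} ?g"
    by (intro smooth2_continuous_on_x smooth2_Dt smooth2_Dx f)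
  then have "((\<lambda>s. integral {?a..s} ?g) has_vector_derivative ?g x) (at x within {?a..?b})"
    by (rule integral_has_vector_derivative) simp
  then have "((\<lambda>s. integral {?a..s} ?g) has_vector_derivative ?g x) (at x within {?a<..<?b})"
    by (rule has_vector_derivative_within_subset) auto
  then have "((\<lambda>s. integral {?a..s} ?g) has_vector_derivative ?g x) (at x)"
    by (simp add: has_vector_derivative_within_open[OF x])
  then have "((\<lambda>s. Dt f ?a t + integral {?a..s} ?g) has_vector_derivative ?g x) (at x)"
    by (rule has_vector_derivative_eq_rhs[OF has_vector_derivative_add[OF has_vector_derivative_const]]) simp
  then have "((\<lambda>s. Dt f s t) has_vector_derivative ?g x) (at x)"
    by (rule has_vector_derivative_transform_within_open[OF _ open_greaterThanLessThan x])
      (auto intro: Dt_eq_integral_Dt_Dx[OF f, symmetric])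
  then show "Dt (Dx f) x t = Dx (Dt f) x t"
    by (rule Dx_eqI[symmetric])
qed

lemma Dx_periodic:
  assumes "(\<lambda>s. f s t) differentiable (at (x + L))" and "\<And>x. f (x + L) t = f x t"
  shows "Dx f (x + L) t = Dx f x t"
proof -
  have "((\<lambda>s. f s t) \<circ> (\<lambda>s. s + L) has_vector_derivative (1::real) *\<^sub>R Dx f (x + L) t) (at x)"
    using assms(1) unfolding Dx_def
    by (intro vector_diff_chain_at) (auto intro!: derivative_eq_intros simp: vector_derivative_works)
  moreover have "(\<lambda>s. f s t) \<circ> (\<lambda>s. s + L) = (\<lambda>s. f s t)"
    using assms(2) by (auto simp: o_def)
  ultimately show ?thesis
    by (intro Dx_eqI[symmetric]) simp
qed

locale centroaffine_family =
  fixes \<gamma> :: "real \<Rightarrow> real \<Rightarrow> real^3" and k1 k2 :: "real \<Rightarrow> real \<Rightarrow> real"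
  assumes smooth: "smooth2 \<gamma>" "smooth2 k1" "smooth2 k2"
    and arclength: "\<And>x t. det3 (\<gamma> x t) (Dx \<gamma> x t) (Dx (Dx \<gamma>) x t) = 1"
    and invariants: "\<And>x t. Dx (Dx (Dx \<gamma>)) x t
                        = Dx (\<lambda>x t. k1 x t *\<^sub>R \<gamma> x t) x t + k2 x t *\<^sub>R \<gamma> x t"
begin

definition frame :: "real \<Rightarrow> real \<Rightarrow> real \<Rightarrow> real \<Rightarrow> real \<Rightarrow> real^3" where
  "frame p q r x t = p *\<^sub>R \<gamma> x t + q *\<^sub>R Dx \<gamma> x t + r *\<^sub>R Dx (Dx \<gamma>) x t"

lemma det3_frame_first: "det3 (frame p q r x t) (Dx \<gamma> x t) (Dx (Dx \<gamma>) x t) = p"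
  using det3_combination_first arclength by (simp add: frame_def)

lemma det3_frame_middle: "det3 (\<gamma> x t) (frame p q r x t) (Dx (Dx \<gamma>) x t) = q"
  using det3_combination_middle arclength by (simp add: frame_def)

lemma third_derivative_frame: "Dx (Dx (Dx \<gamma>)) x t = frame (Dx k1 x t + k2 x t) (k1 x t) 0 x t"
proof -
  have "Dx (\<lambda>x t. k1 x t *\<^sub>R \<gamma> x t) x t = k1 x t *\<^sub>R Dx \<gamma> x t + Dx k1 x t *\<^sub>R \<gamma> x t"
    by (intro Dx_eqI has_vector_derivative_scaleR has_real_derivative_Dx has_vector_derivative_Dx smooth)
  then show ?thesis
    by (simp add: invariants frame_def algebra_simps)
qed

lemmas has_real_derivative_invariants =
  has_real_derivative_Dx[OF smooth(2)] has_real_derivative_Dx[OF smooth2_Dx[OF smooth(2)]]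
  has_real_derivative_Dx[OF smooth2_Dx[OF smooth2_Dx[OF smooth(2)]]]
  has_real_derivative_Dx[OF smooth(3)] has_real_derivative_Dx[OF smooth2_Dx[OF smooth(3)]]

lemma Dx_frameI:
  assumes "((\<lambda>s. p s t) has_real_derivative p') (at x)" "((\<lambda>s. q s t) has_real_derivative q') (at x)"
    "((\<lambda>s. r s t) has_real_derivative r') (at x)"
    and "P = p' + r x t * (Dx k1 x t + k2 x t)" "Q = p x t + q' + r x t * k1 x t" "R = q x t + r'"
  shows "Dx (\<lambda>x t. frame (p x t) (q x t) (r x t) x t) x t = frame P Q R x t"
proof (rule Dx_eqI)
  have "((\<lambda>s. frame (p s t) (q s t) (r s t) s t) has_vector_derivative
      (p x t *\<^sub>R Dx \<gamma> x t + p' *\<^sub>R \<gamma> x t) + (q x t *\<^sub>R Dx (Dx \<gamma>) x t + q' *\<^sub>R Dx \<gamma> x t)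
      + (r x t *\<^sub>R Dx (Dx (Dx \<gamma>)) x t + r' *\<^sub>R Dx (Dx \<gamma>) x t)) (at x)"
    unfolding frame_def using assms
    by (intro has_vector_derivative_add has_vector_derivative_scaleR has_vector_derivative_Dx
        smooth2_Dx smooth) (simp_all add: has_real_derivative_iff_has_vector_derivative)
  then show "((\<lambda>s. frame (p s t) (q s t) (r s t) s t) has_vector_derivative frame P Q R x t) (at x)"
    by (simp add: assms(4-6) third_derivative_frame frame_def algebra_simps)
qed

lemma det3_third_derivative_middle: "det3 (\<gamma> x t) (Dx (Dx (Dx \<gamma>)) x t) (Dx (Dx \<gamma>) x t) = k1 x t"
  by (simp add: third_derivative_frame det3_frame_middle)

lemma det3_third_derivative_first:
  "det3 (Dx (Dx (Dx \<gamma>)) x t) (Dx \<gamma> x t) (Dx (Dx \<gamma>) x t) = Dx k1 x t + k2 x t"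
  by (simp add: third_derivative_frame det3_frame_first)

lemma invariants_periodic:
  assumes periodic: "\<And>x t. \<gamma> (x + L) t = \<gamma> x t"
  shows "k1 (x + L) t = k1 x t" and "k2 (x + L) t = k2 x t"
proof -
  have Dx_per: "Dx f (x + L) t = Dx f x t"
    if "smooth2 f" and "\<And>x t. f (x + L) t = f x t" for f :: "real \<Rightarrow> real \<Rightarrow> 'a::real_normed_vector" and x t
    using that by (intro Dx_periodic smooth2_differentiable_x)
  have per1: "Dx \<gamma> (x + L) t = Dx \<gamma> x t" for x t
    using smooth(1) periodic by (rule Dx_per)
  have per2: "Dx (Dx \<gamma>) (x + L) t = Dx (Dx \<gamma>) x t" for x t
    using smooth2_Dx[OF smooth(1)] per1 by (rule Dx_per)
  have per3: "Dx (Dx (Dx \<gamma>)) (x + L) t = Dx (Dx (Dx \<gamma>)) x t" for x t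
    using smooth2_Dx[OF smooth2_Dx[OF smooth(1)]] per2 by (rule Dx_per)
  show per_k1: "k1 (x + L) t = k1 x t" for x t
    using det3_third_derivative_middle[of "x + L" t] det3_third_derivative_middle[of x t]
    by (simp only: periodic per2 per3)
  have "Dx k1 (x + L) t = Dx k1 x t"
    using smooth(2) per_k1 by (rule Dx_per)
  then show "k2 (x + L) t = k2 x t"
    using det3_third_derivative_first[of "x + L" t] det3_third_derivative_first[of x t]
    by (simp only: per1 per2 per3)
qed

end

locale centroaffine_flow = centroaffine_family +
  assumes flow: "\<And>x t. Dt \<gamma> x t = Dx (Dx \<gamma>) x t - (2/3 * k1 x t) *\<^sub>R \<gamma> x t"
begin

lemma Dt_gamma_frame: "Dt \<gamma> = (\<lambda>x t. frame (- 2/3 * k1 x t) 0 1 x t)"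
  by (intro ext) (simp add: flow frame_def)

lemma Dx_Dt_gamma_frame: "Dx (Dt \<gamma>) = (\<lambda>x t. frame (Dx k1 x t / 3 + k2 x t) (k1 x t / 3) 0 x t)"
  unfolding Dt_gamma_frame
  by (intro ext Dx_frameI) (auto intro!: derivative_eq_intros has_real_derivative_invariants)

lemma det3_Dx3_Dt:
  "det3 (\<gamma> x t) (Dx (Dx (Dx (Dt \<gamma>))) x t) (Dx (Dx \<gamma>) x t)
     = Dx (Dx k1) x t + 2 * Dx k2 x t + k1 x t ^ 2 / 3"
proof -
  note derivs = derivative_eq_intros has_real_derivative_invariants
  have Dx2: "Dx (Dx (Dt \<gamma>)) = (\<lambda>x t. frame (Dx (Dx k1) x t / 3 + Dx k2 x t)
      (2/3 * Dx k1 x t + k2 x t) (k1 x t / 3) x t)"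
    unfolding Dx_Dt_gamma_frame by (intro ext Dx_frameI) (auto intro!: derivs)
  have "Dx (Dx (Dx (Dt \<gamma>))) x t = frame (Dx (Dx (Dx k1)) x t / 3 + Dx (Dx k2) x t
      + k1 x t / 3 * (Dx k1 x t + k2 x t)) (Dx (Dx k1) x t + 2 * Dx k2 x t + k1 x t ^ 2 / 3)
      (Dx k1 x t + k2 x t) x t"
    unfolding Dx2 by (intro Dx_frameI) (auto intro!: derivs simp: power2_eq_square)
  then show ?thesis
    by (simp add: det3_frame_middle)
qed

lemma det3_Dt_Dx3:
  "det3 (\<gamma> x t) (Dt (Dx (Dx (Dx \<gamma>))) x t) (Dx (Dx \<gamma>) x t) = Dt k1 x t + k1 x t ^ 2 / 3"
proof -
  have "Dt (Dx (Dx (Dx \<gamma>))) x t = ((Dx k1 x t + k2 x t) *\<^sub>R Dt \<gamma> x t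
      + (Dt (Dx k1) x t + Dt k2 x t) *\<^sub>R \<gamma> x t) + (k1 x t *\<^sub>R Dt (Dx \<gamma>) x t + Dt k1 x t *\<^sub>R Dx \<gamma> x t)"
  proof (rule Dt_eqI)
    have eq: "(\<lambda>s. Dx (Dx (Dx \<gamma>)) x s) = (\<lambda>s. (Dx k1 x s + k2 x s) *\<^sub>R \<gamma> x s + k1 x s *\<^sub>R Dx \<gamma> x s)"
      by (simp add: third_derivative_frame frame_def)
    show "((\<lambda>s. Dx (Dx (Dx \<gamma>)) x s) has_vector_derivative ((Dx k1 x t + k2 x t) *\<^sub>R Dt \<gamma> x t
      + (Dt (Dx k1) x t + Dt k2 x t) *\<^sub>R \<gamma> x t) + (k1 x t *\<^sub>R Dt (Dx \<gamma>) x t + Dt k1 x t *\<^sub>R Dx \<gamma> x t)) (at t)"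
      unfolding eq by (intro has_vector_derivative_add has_vector_derivative_scaleR
          has_vector_derivative_Dt has_real_derivative_Dt DERIV_add smooth2_Dx smooth)
  qed
  moreover have "det3 (\<gamma> x t) (Dt (Dx \<gamma>) x t) (Dx (Dx \<gamma>) x t) = k1 x t / 3"
    by (simp add: Dt_Dx_commute smooth Dx_Dt_gamma_frame det3_frame_middle)
  moreover have "det3 (\<gamma> x t) (Dt \<gamma> x t) (Dx (Dx \<gamma>) x t) = 0"
    by (simp add: Dt_gamma_frame det3_frame_middle)
  ultimately show ?thesis
    by (simp add: det3_add_middle det3_scaleR_middle det3_same_first_middle arclength power2_eq_square)
qed

lemma Dt_k1: "Dt k1 x t = Dx (\<lambda>x t. Dx k1 x t + 2 * k2 x t) x t"
proof -
  have "Dt (Dx (Dx (Dx \<gamma>))) = Dx (Dx (Dx (Dt \<gamma>)))"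
    by (simp add: Dt_Dx_commute smooth2_Dx smooth)
  then have "Dt k1 x t = Dx (Dx k1) x t + 2 * Dx k2 x t"
    using det3_Dt_Dx3[of x t] det3_Dx3_Dt[of x t] by simp
  also have "\<dots> = Dx (\<lambda>x t. Dx k1 x t + 2 * k2 x t) x t"
    by (rule Dx_real_eqI[symmetric]) (auto intro!: derivative_eq_intros has_real_derivative_invariants)
  finally show ?thesis .
qed

lemma integral_k1_conserved:
  assumes "0 \<le> L" and periodic: "\<And>x t. \<gamma> (x + L) t = \<gamma> x t"
  shows "integral {0..L} (\<lambda>x. k1 x t1) = integral {0..L} (\<lambda>x. k1 x t2)"
proof -
  let ?h = "\<lambda>x t. Dx k1 x t + 2 * k2 x t"
  have "integral {0..L} (\<lambda>x. Dt k1 x t) = 0" for t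
  proof -
    have "integral {0..L} (\<lambda>x. Dt k1 x t) = ?h L t - ?h 0 t"
      unfolding Dt_k1 using \<open>0 \<le> L\<close>
      by (intro integral_Dx differentiable_add differentiable_mult differentiable_const
          smooth2_differentiable_x[OF smooth2_Dx[OF smooth(2)]] smooth2_differentiable_x[OF smooth(3)])
    also have "\<dots> = 0"
      using invariants_periodic[OF periodic, where x=0 and t=t]
        Dx_periodic[where f=k1 and x=0, OF smooth2_differentiable_x[OF smooth(2)]
          invariants_periodic(1)[OF periodic]]
      by simp
    finally show ?thesis .
  qed
  then have "((\<lambda>t. integral {0..L} (\<lambda>x. k1 x t)) has_real_derivative 0) (at t)" for t
    using has_vector_derivative_integral_Dt[OF smooth(2), of 0 L t]
    by (simp add: has_real_derivative_iff_has_vector_derivative)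
  then show ?thesis
    using DERIV_isconst_all[of "\<lambda>t. integral {0..L} (\<lambda>x. k1 x t)"] by blast
qed

end

theorem mainTheorem4:
  fixes \<gamma> :: "real \<Rightarrow> real \<Rightarrow> real^3"
    and k1 k2 :: "real \<Rightarrow> real \<Rightarrow> real"
  assumes smooth: "smooth2 \<gamma>" "smooth2 k1" "smooth2 k2"
    and arclength: "\<And>x t. det3 (\<gamma> x t) (Dx \<gamma> x t) (Dx (Dx \<gamma>) x t) = 1"
    and invariants: "\<And>x t. Dx (Dx (Dx \<gamma>)) x t
                        = Dx (\<lambda>x t. k1 x t *\<^sub>R \<gamma> x t) x t + k2 x t *\<^sub>R \<gamma> x t"
    and flow: "\<And>x t. Dt \<gamma> x t = Dx (Dx \<gamma>) x t - (2/3 * k1 x t) *\<^sub>R \<gamma> x t"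
  shows "(\<forall>x t. Dt k1 x t = Dx (\<lambda>x t. Dx k1 x t + 2 * k2 x t) x t)
       \<and> (\<forall>L>0. (\<forall>x t. \<gamma> (x + L) t = \<gamma> x t) \<longrightarrow>
            (\<forall>t1 t2. integral {0..L} (\<lambda>x. k1 x t1) = integral {0..L} (\<lambda>x. k1 x t2)))"
proof -
  interpret centroaffine_flow \<gamma> k1 k2
    by unfold_locales (fact assms)+
  show ?thesis
    using Dt_k1 integral_k1_conserved by (auto simp: less_imp_le)
qed

end
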